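(* For any finite simple graph $G$, $\tau(G) \leq 1.5\,\tau^*_3(G)$, while there exists a family of graphs $G$ for which $\tau(G) = (2-o(1))\,\tau^*(G)$.
   Context: A triangle of $G$ is a set of three pairwise adjacent vertices, identified with its three edges. $\tau(G)$ is the minimum size of a set of edges meeting every triangle of $G$. $\tau^*(G)$ is the optimum value of the linear program: minimize $\sum_{e\in E(G)} x_e$ subject to $\sum_{e\in E(t)} x_e\ge 1$ for every triangle $t$ and $x\ge 0$. For an integer $k\ge1$, $\tau^*_k(G)$ is the minimum of $\sum_e z(e)$ over all $z:E(G)\to\{0,1/k,\dots,1\}$ with $\sum_{e\in E(t)} z(e)\ge1$ for every triangle $t$ (equivalently, the minimum of $|F|/k$ over multisets $F$ of edges such that each triangle contains at least $k$ elements of $F$). *)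

theory Defs
  imports Complex_Main
begin

definition simple_graph :: "'a set \<Rightarrow> 'a set set \<Rightarrow> bool" where
  "simple_graph V E \<longleftrightarrow> finite V \<and> (\<forall>e\<in>E. e \<subseteq> V \<and> card e = 2)"

definition triangles :: "'a set \<Rightarrow> 'a set set \<Rightarrow> 'a set set" where
  "triangles V E = {{x, y, z} | x y z. x \<in> V \<and> y \<in> V \<and> z \<in> V \<and>
      x \<noteq> y \<and> y \<noteq> z \<and> x \<noteq> z \<and> {x, y} \<in> E \<and> {y, z} \<in> E \<and> {x, z} \<in> E}"

definition tri_edges :: "'a set \<Rightarrow> 'a set set" where
  "tri_edges t = {e. e \<subseteq> t \<and> card e = 2}"

definition tau :: "'a set \<Rightarrow> 'a set set \<Rightarrow> nat" where
  "tau V E = Min {card F | F. F \<subseteq> E \<and> (\<forall>t\<in>triangles V E. F \<inter> tri_edges t \<noteq> {})}"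

definition tau_star :: "'a set \<Rightarrow> 'a set set \<Rightarrow> real" where
  "tau_star V E = Inf {(\<Sum>e\<in>E. x e) | x :: 'a set \<Rightarrow> real.
      (\<forall>e\<in>E. x e \<ge> 0) \<and> (\<forall>t\<in>triangles V E. (\<Sum>e\<in>tri_edges t. x e) \<ge> 1)}"

text \<open>tau*_k(G): minimum of sum z(e) over z : E -> {0, 1/k, ..., 1} with
  every triangle having total weight at least 1; we write z = w/k with w
  natural-valued, 0 <= w e <= k.\<close>
definition tau_k :: "nat \<Rightarrow> 'a set \<Rightarrow> 'a set set \<Rightarrow> real" where
  "tau_k k V E = Inf {(\<Sum>e\<in>E. real (w e)) / real k | w :: 'a set \<Rightarrow> nat.
      (\<forall>e\<in>E. w e \<le> k) \<and> (\<forall>t\<in>triangles V E. (\<Sum>e\<in>tri_edges t. w e) \<ge> k)}"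

end

(*
  Upper bound: let w : E \<rightarrow> {0,...,3} put weight at least 3 on every triangle.  Take a cut
  separating at least half of the edges of weight 1, and cover with all edges of weight at
  least 2 together with the edges of weight 1 not separated by the cut.  A triangle without
  an edge of weight at least 2 consists of three edges of weight 1, and no cut separates all
  three edges of a triangle.  So 2 tau \<le> \<Sum> w, i.e. tau \<le> 3/2 tau*_3.

  Lower-bound family: put an apex over a graph H on m vertices with fewer than K triangles
  and no independent set of t vertices.  A triangle cover missing the apex edges at a set T
  of vertices must contain every edge of H inside T, and T spans more than |T| - t such edges,
  so tau > m - t.  A maximum matching of H misses fewer than t vertices, and its edges span
  edge-disjoint apex triangles, so tau* > (m - t)/2.  Conversely all apex edges plus one edge
  per triangle of H cover, and so does weight 1/2 on the apex edges plus such edges, giving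
  tau \<le> m + K and tau* \<le> m/2 + K.  Counting over all graphs with M edges on m = 2^(4k)
  vertices yields such H with t and K of order k 2^(3k) = o(m), so tau/tau* \<rightarrow> 2.
*)

theory Submission
  imports Defs
begin

definition triangle_cover :: "'a set \<Rightarrow> 'a set set \<Rightarrow> 'a set set \<Rightarrow> bool" where
  "triangle_cover V E F \<longleftrightarrow> F \<subseteq> E \<and> (\<forall>t\<in>triangles V E. F \<inter> tri_edges t \<noteq> {})"

definition fractional_cover :: "'a set \<Rightarrow> 'a set set \<Rightarrow> ('a set \<Rightarrow> real) \<Rightarrow> bool" where
  "fractional_cover V E x \<longleftrightarrow>
     (\<forall>e\<in>E. 0 \<le> x e) \<and> (\<forall>t\<in>triangles V E. 1 \<le> (\<Sum>e\<in>tri_edges t. x e))"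

lemma tri_edges_triple:
  assumes "x \<noteq> y" "y \<noteq> z" "x \<noteq> z"
  shows "tri_edges {x, y, z} = {{x, y}, {y, z}, {x, z}}"
proof
  show "tri_edges {x, y, z} \<subseteq> {{x, y}, {y, z}, {x, z}}"
  proof
    fix e assume "e \<in> tri_edges {x, y, z}"
    then have "e \<subseteq> {x, y, z}" "card e = 2" unfolding tri_edges_def by auto
    then show "e \<in> {{x, y}, {y, z}, {x, z}}" by (auto simp: card_2_iff)
  qed
  show "{{x, y}, {y, z}, {x, z}} \<subseteq> tri_edges {x, y, z}"
    using assms unfolding tri_edges_def by auto
qed

lemma sum_tri_edges_triple:
  assumes "x \<noteq> y" "y \<noteq> z" "x \<noteq> z"
  shows "(\<Sum>e\<in>tri_edges {x, y, z}. f e) = f {x, y} + f {y, z} + f {x, z}"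
proof -
  have "{x, y} \<noteq> {y, z}" "{x, y} \<noteq> {x, z}" "{y, z} \<noteq> {x, z}"
    using assms by (auto simp: doubleton_eq_iff)
  then show ?thesis unfolding tri_edges_triple[OF assms] by (simp add: add.assoc)
qed

lemma card_tri_edges: "finite X \<Longrightarrow> card (tri_edges X) = card X choose 2"
  unfolding tri_edges_def using n_subsets[of X 2] by simp

lemma trianglesE:
  assumes "t \<in> triangles V E"
  obtains x y z where "t = {x, y, z}" "x \<in> V" "y \<in> V" "z \<in> V" "x \<noteq> y" "y \<noteq> z" "x \<noteq> z"
    "{x, y} \<in> E" "{y, z} \<in> E" "{x, z} \<in> E"
  using assms unfolding triangles_def by blast

lemma triangles_eq: "triangles V E = {X. X \<subseteq> V \<and> card X = 3 \<and> tri_edges X \<subseteq> E}"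
proof (intro equalityI subsetI)
  fix t assume "t \<in> triangles V E"
  then obtain x y z where "t = {x, y, z}" "x \<in> V" "y \<in> V" "z \<in> V" "x \<noteq> y" "y \<noteq> z" "x \<noteq> z"
    "{x, y} \<in> E" "{y, z} \<in> E" "{x, z} \<in> E" by (rule trianglesE)
  then show "t \<in> {X. X \<subseteq> V \<and> card X = 3 \<and> tri_edges X \<subseteq> E}"
    by (simp add: tri_edges_triple)
next
  fix X assume X: "X \<in> {X. X \<subseteq> V \<and> card X = 3 \<and> tri_edges X \<subseteq> E}"
  then obtain x y z where xyz: "X = {x, y, z}" "x \<noteq> y" "y \<noteq> z" "x \<noteq> z"
    by (auto simp: card_3_iff)
  with X show "X \<in> triangles V E"
    unfolding triangles_def by (auto simp: tri_edges_triple)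
qed

lemma triangle_card_tri_edges: "t \<in> triangles V E \<Longrightarrow> card (tri_edges t) = 3"
  unfolding triangles_eq by (simp add: card_tri_edges card_ge_0_finite numeral_eq_Suc)

lemma finite_triangles: "finite V \<Longrightarrow> finite (triangles V E)"
  unfolding triangles_eq by simp

lemma simple_graph_finite_edges: "simple_graph V E \<Longrightarrow> finite E"
  unfolding simple_graph_def by (meson Pow_iff finite_Pow_iff finite_subset subsetI)

lemma triangle_cover_all_edges: "triangle_cover V E E"
  unfolding triangle_cover_def
proof (intro conjI ballI subset_refl)
  fix t assume "t \<in> triangles V E"
  then obtain x y z where "t = {x, y, z}" "x \<noteq> y" "y \<noteq> z" "x \<noteq> z" "{x, y} \<in> E"
    by (rule trianglesE)
  then show "E \<inter> tri_edges t \<noteq> {}" by (auto simp: tri_edges_triple)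
qed

lemma finite_triangle_cover_sizes:
  assumes "simple_graph V E"
  shows "finite {card F | F. triangle_cover V E F}"
proof -
  have "{card F | F. triangle_cover V E F} \<subseteq> card ` Pow E"
    unfolding triangle_cover_def by auto
  then show ?thesis using simple_graph_finite_edges[OF assms] finite_subset by blast
qed

lemma tau_le_card:
  assumes "simple_graph V E" "triangle_cover V E F"
  shows "tau V E \<le> card F"
  using finite_triangle_cover_sizes[OF assms(1)] assms(2)
  unfolding tau_def triangle_cover_def[symmetric] by (blast intro: Min_le)

lemma tau_obtains_cover:
  assumes "simple_graph V E"
  obtains F where "triangle_cover V E F" "card F = tau V E"
proof -
  have "{card F | F. triangle_cover V E F} \<noteq> {}"
    using triangle_cover_all_edges by blast
  then have "tau V E \<in> {card F | F. triangle_cover V E F}"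
    using finite_triangle_cover_sizes[OF assms]
    unfolding tau_def triangle_cover_def[symmetric] by (intro Min_in)
  then obtain F where "triangle_cover V E F" "tau V E = card F" by blast
  then show ?thesis using that by simp
qed

lemma tau_star_eq_Inf: "tau_star V E = Inf ((\<lambda>x. \<Sum>e\<in>E. x e) ` Collect (fractional_cover V E))"
  unfolding tau_star_def fractional_cover_def setcompr_eq_image ..

lemma tau_k_eq_Inf:
  "tau_k k V E = Inf ((\<lambda>w. (\<Sum>e\<in>E. real (w e)) / real k) `
     {w. (\<forall>e\<in>E. w e \<le> k) \<and> (\<forall>t\<in>triangles V E. k \<le> (\<Sum>e\<in>tri_edges t. w e))})"
  unfolding tau_k_def setcompr_eq_image ..

lemma tau_star_le_sum:
  assumes "fractional_cover V E x"
  shows "tau_star V E \<le> (\<Sum>e\<in>E. x e)"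
proof -
  have "bdd_below ((\<lambda>x. \<Sum>e\<in>E. x e) ` Collect (fractional_cover V E))"
    by (rule bdd_belowI2[of _ 0]) (simp add: fractional_cover_def sum_nonneg)
  moreover have "(\<Sum>e\<in>E. x e) \<in> (\<lambda>x. \<Sum>e\<in>E. x e) ` Collect (fractional_cover V E)"
    using assms by simp
  ultimately show ?thesis unfolding tau_star_eq_Inf by (rule cInf_lower[rotated])
qed

lemma le_tau_star:
  assumes "\<And>x. fractional_cover V E x \<Longrightarrow> c \<le> (\<Sum>e\<in>E. x e)"
  shows "c \<le> tau_star V E"
  unfolding tau_star_eq_Inf
proof (rule cInf_greatest)
  have "fractional_cover V E (\<lambda>_. 1)"
    unfolding fractional_cover_def by (simp add: triangle_card_tri_edges)
  then show "(\<lambda>x. \<Sum>e\<in>E. x e) ` Collect (fractional_cover V E) \<noteq> {}" by blast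
next
  fix s assume "s \<in> (\<lambda>x. \<Sum>e\<in>E. x e) ` Collect (fractional_cover V E)"
  then obtain x where "fractional_cover V E x" "s = (\<Sum>e\<in>E. x e)" by blast
  then show "c \<le> s" using assms by simp
qed

lemma le_tau_k:
  assumes "\<And>w. \<forall>t\<in>triangles V E. k \<le> (\<Sum>e\<in>tri_edges t. w e) \<Longrightarrow>
      c \<le> (\<Sum>e\<in>E. real (w e)) / real k"
  shows "c \<le> tau_k k V E"
proof -
  define W where
    "W = {w. (\<forall>e\<in>E. w e \<le> k) \<and> (\<forall>t\<in>triangles V E. k \<le> (\<Sum>e\<in>tri_edges t. w e))}"
  have "(\<lambda>_. k) \<in> W"
    unfolding W_def by (simp add: triangle_card_tri_edges)
  then have "(\<lambda>w. (\<Sum>e\<in>E. real (w e)) / real k) ` W \<noteq> {}" by blast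
  moreover have "c \<le> s" if "s \<in> (\<lambda>w. (\<Sum>e\<in>E. real (w e)) / real k) ` W" for s
    using that assms unfolding W_def by blast
  ultimately show ?thesis unfolding tau_k_eq_Inf W_def[symmetric] by (rule cInf_greatest)
qed

lemma triangle_edge_choice:
  obtains f where "\<forall>t\<in>triangles V E. f t \<in> E \<inter> tri_edges t"
proof -
  have "\<exists>e. e \<in> E \<inter> tri_edges t" if t: "t \<in> triangles V E" for t
  proof -
    obtain x y z where "t = {x, y, z}" "x \<noteq> y" "y \<noteq> z" "x \<noteq> z" "{x, y} \<in> E"
      using t by (rule trianglesE)
    then show ?thesis by (auto simp: tri_edges_triple)
  qed
  then show ?thesis using that by metis
qed

lemma card_le_tau_star:
  assumes G: "simple_graph V E" and Ts: "Ts \<subseteq> triangles V E"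
    and disj: "pairwise (\<lambda>s t. disjnt (tri_edges s) (tri_edges t)) Ts"
  shows "real (card Ts) \<le> tau_star V E"
proof (rule le_tau_star)
  fix x assume x: "fractional_cover V E x"
  have "finite V" using G unfolding simple_graph_def by simp
  then have fin: "finite Ts" "finite E"
    using Ts finite_triangles finite_subset simple_graph_finite_edges[OF G] by blast+
  have edges: "tri_edges t \<subseteq> E" "finite (tri_edges t)" if "t \<in> Ts" for t
  proof -
    show "tri_edges t \<subseteq> E" using that Ts unfolding triangles_eq by auto
    then show "finite (tri_edges t)" using fin(2) finite_subset by blast
  qed
  have "real (card Ts) = (\<Sum>t\<in>Ts. 1)" by simp
  also have "\<dots> \<le> (\<Sum>t\<in>Ts. \<Sum>e\<in>tri_edges t. x e)"
    using x Ts unfolding fractional_cover_def by (intro sum_mono) auto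
  also have "\<dots> = (\<Sum>e\<in>(\<Union>t\<in>Ts. tri_edges t). x e)"
    using disj fin edges unfolding pairwise_def disjnt_def by (intro sum.UNION_disjoint[symmetric]) auto
  also have "\<dots> \<le> (\<Sum>e\<in>E. x e)"
    using x edges fin unfolding fractional_cover_def by (intro sum_mono2) auto
  finally show "real (card Ts) \<le> (\<Sum>e\<in>E. x e)" .
qed

section \<open>The upper bound by rounding thirds\<close>

definition uncut_edges :: "'a set \<Rightarrow> 'a set set \<Rightarrow> 'a set set" where
  "uncut_edges S E = {e\<in>E. e \<subseteq> S \<or> e \<inter> S = {}}"

lemma card_uncut_insert_plus_remove:
  assumes "finite E" "\<forall>e\<in>E. card e = 2 \<and> v \<in> e"
  shows "card (uncut_edges (insert v S) E) + card (uncut_edges (S - {v}) E) = card E"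
proof -
  have "e \<in> uncut_edges (insert v S) E \<longleftrightarrow> e \<in> E - uncut_edges (S - {v}) E" for e
  proof (cases "e \<in> E")
    case True
    then obtain u where "e = {v, u}" "u \<noteq> v"
      using assms(2) by (auto simp: card_2_iff doubleton_eq_iff)
    then show ?thesis using True unfolding uncut_edges_def by auto
  qed (simp add: uncut_edges_def)
  then have "uncut_edges (insert v S) E = E - uncut_edges (S - {v}) E" by blast
  moreover have sub: "uncut_edges (S - {v}) E \<subseteq> E" unfolding uncut_edges_def by auto
  ultimately show ?thesis
    using card_Diff_subset[OF finite_subset[OF sub assms(1)] sub] card_mono[OF assms(1) sub] by simp
qed

lemma exists_cut_half_uncut:
  assumes "finite V" "\<forall>e\<in>E. e \<subseteq> V \<and> card e = 2"
  shows "\<exists>S. 2 * card (uncut_edges S E) \<le> card E"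
  using assms
proof (induction V arbitrary: E rule: finite_induct)
  case empty
  then have "E = {}" by fastforce
  then show ?case by (simp add: uncut_edges_def)
next
  case (insert v V)
  define Ev where "Ev = {e\<in>E. v \<in> e}"
  define E' where "E' = E - Ev"
  have "E \<subseteq> Pow (insert v V)" using insert.prems by auto
  then have "finite E" using insert.hyps(1) finite_subset by blast
  then have fin: "finite Ev" "finite E'" unfolding Ev_def E'_def by auto
  have "\<forall>e\<in>E'. e \<subseteq> V \<and> card e = 2" using insert.prems unfolding E'_def Ev_def by blast
  then obtain S where S: "2 * card (uncut_edges S E') \<le> card E'"
    using insert.IH by blast
  have E'_uncut: "uncut_edges (insert v S) E' = uncut_edges S E'"
    "uncut_edges (S - {v}) E' = uncut_edges S E'"
    unfolding E'_def Ev_def uncut_edges_def by blast+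
  have split: "card (uncut_edges X E) = card (uncut_edges X E') + card (uncut_edges X Ev)" for X
  proof -
    have "uncut_edges X E = uncut_edges X E' \<union> uncut_edges X Ev"
      unfolding E'_def Ev_def uncut_edges_def by blast
    moreover have "uncut_edges X E' \<inter> uncut_edges X Ev = {}"
      unfolding E'_def uncut_edges_def by blast
    moreover have "finite (uncut_edges X E')" "finite (uncut_edges X Ev)"
      using fin unfolding uncut_edges_def by auto
    ultimately show ?thesis by (simp add: card_Un_disjoint)
  qed
  have "card (uncut_edges (insert v S) Ev) + card (uncut_edges (S - {v}) Ev) = card Ev"
    using fin(1) insert.prems by (intro card_uncut_insert_plus_remove) (auto simp: Ev_def)
  moreover have "card E = card E' + card Ev"
    using card_Diff_subset[of Ev E] card_mono[of E Ev] \<open>finite E\<close> fin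
    unfolding E'_def Ev_def by fastforce
  ultimately have "2 * card (uncut_edges (insert v S) E) \<le> card E \<or> 2 * card (uncut_edges (S - {v}) E) \<le> card E"
    using S split[of "insert v S", unfolded E'_uncut] split[of "S - {v}", unfolded E'_uncut]
    by linarith
  then show ?case by blast
qed

lemma triangle_cover_heavy_and_uncut:
  fixes w :: "'a set \<Rightarrow> nat"
  assumes weight: "\<forall>t\<in>triangles V E. 3 \<le> (\<Sum>e\<in>tri_edges t. w e)"
  shows "triangle_cover V E ({e\<in>E. 2 \<le> w e} \<union> uncut_edges S {e\<in>E. w e = 1})"
  unfolding triangle_cover_def
proof (intro conjI ballI)
  show "{e\<in>E. 2 \<le> w e} \<union> uncut_edges S {e\<in>E. w e = 1} \<subseteq> E"
    unfolding uncut_edges_def by auto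
next
  fix t assume t: "t \<in> triangles V E"
  then obtain x y z where xyz: "t = {x, y, z}" "x \<noteq> y" "y \<noteq> z" "x \<noteq> z"
    "{x, y} \<in> E" "{y, z} \<in> E" "{x, z} \<in> E" by (rule trianglesE)
  have "3 \<le> (\<Sum>e\<in>tri_edges t. w e)" using weight t by blast
  then have "3 \<le> w {x, y} + w {y, z} + w {x, z}"
    unfolding xyz(1) sum_tri_edges_triple[OF xyz(2-4)] .
  then consider "2 \<le> w {x, y} \<or> 2 \<le> w {y, z} \<or> 2 \<le> w {x, z}"
    | "w {x, y} = 1" "w {y, z} = 1" "w {x, z} = 1" by linarith
  then show "({e\<in>E. 2 \<le> w e} \<union> uncut_edges S {e\<in>E. w e = 1}) \<inter> tri_edges t \<noteq> {}"
  proof cases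
    case 1
    then show ?thesis using xyz by (auto simp: tri_edges_triple)
  next
    case 2
    then have "{{x, y}, {y, z}, {x, z}} \<subseteq> {e\<in>E. w e = 1}" using xyz by auto
    moreover have "\<exists>e\<in>{{x, y}, {y, z}, {x, z}}. e \<subseteq> S \<or> e \<inter> S = {}"
      by auto
    ultimately have "uncut_edges S {e\<in>E. w e = 1} \<inter> {{x, y}, {y, z}, {x, z}} \<noteq> {}"
      unfolding uncut_edges_def by blast
    then show ?thesis unfolding xyz(1) tri_edges_triple[OF xyz(2-4)] by blast
  qed
qed

lemma tau_le_half_weight:
  fixes w :: "'a set \<Rightarrow> nat"
  assumes G: "simple_graph V E" and weight: "\<forall>t\<in>triangles V E. 3 \<le> (\<Sum>e\<in>tri_edges t. w e)"
  shows "2 * tau V E \<le> (\<Sum>e\<in>E. w e)"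
proof -
  have finE: "finite E" using simple_graph_finite_edges[OF G] .
  define E2 where "E2 = {e\<in>E. 2 \<le> w e}"
  define E1 where "E1 = {e\<in>E. w e = 1}"
  have "finite V" "\<forall>e\<in>E1. e \<subseteq> V \<and> card e = 2"
    using G unfolding simple_graph_def E1_def by auto
  then obtain S where S: "2 * card (uncut_edges S E1) \<le> card E1"
    using exists_cut_half_uncut by blast
  have "triangle_cover V E (E2 \<union> uncut_edges S E1)"
    unfolding E1_def E2_def by (rule triangle_cover_heavy_and_uncut[OF weight])
  then have "2 * tau V E \<le> 2 * card (E2 \<union> uncut_edges S E1)" using tau_le_card[OF G] by simp
  also have "\<dots> \<le> 2 * card E2 + card E1"
    using card_Un_le[of E2 "uncut_edges S E1"] S by linarith
  also have "\<dots> \<le> (\<Sum>e\<in>E2. w e) + (\<Sum>e\<in>E1. w e)"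
    using sum_mono[of E2 "\<lambda>_. 2" w] by (simp add: E1_def E2_def)
  also have "\<dots> = (\<Sum>e\<in>E2 \<union> E1. w e)"
    using finE by (intro sum.union_disjoint[symmetric]) (auto simp: E1_def E2_def)
  also have "\<dots> \<le> (\<Sum>e\<in>E. w e)"
    using finE by (intro sum_mono2) (auto simp: E1_def E2_def)
  finally show ?thesis .
qed

lemma tau_le_three_halves_tau_k:
  assumes "simple_graph V E"
  shows "real (tau V E) \<le> 3 / 2 * tau_k 3 V E"
proof -
  have "2 / 3 * real (tau V E) \<le> tau_k 3 V E"
  proof (rule le_tau_k)
    fix w :: "'a set \<Rightarrow> nat"
    assume "\<forall>t\<in>triangles V E. 3 \<le> (\<Sum>e\<in>tri_edges t. w e)"
    then have "2 * tau V E \<le> (\<Sum>e\<in>E. w e)" by (rule tau_le_half_weight[OF assms])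
    then have "real (2 * tau V E) \<le> real (\<Sum>e\<in>E. w e)"
      by (simp only: of_nat_le_iff)
    then have "2 * real (tau V E) \<le> (\<Sum>e\<in>E. real (w e))"
      by simp
    then show "2 / 3 * real (tau V E) \<le> (\<Sum>e\<in>E. real (w e)) / real 3" by simp
  qed
  then show ?thesis by simp
qed

lemma card_subsets_superset:
  assumes "finite P" "A \<subseteq> P" "card A \<le> M"
  shows "card {G. G \<subseteq> P \<and> card G = M \<and> A \<subseteq> G} = (card P - card A) choose (M - card A)"
proof -
  have fA: "finite A" using assms finite_subset by blast
  have "bij_betw (\<lambda>G. G - A) {G. G \<subseteq> P \<and> card G = M \<and> A \<subseteq> G}
      {B. B \<subseteq> P - A \<and> card B = M - card A}"
  proof (rule bij_betw_byWitness[where f' = "\<lambda>B. B \<union> A"])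
    show "(\<lambda>G. G - A) ` {G. G \<subseteq> P \<and> card G = M \<and> A \<subseteq> G} \<subseteq> {B. B \<subseteq> P - A \<and> card B = M - card A}"
      using fA assms(1) by (auto intro: card_Diff_subset dest: finite_subset)
    show "(\<lambda>B. B \<union> A) ` {B. B \<subseteq> P - A \<and> card B = M - card A} \<subseteq> {G. G \<subseteq> P \<and> card G = M \<and> A \<subseteq> G}"
    proof (rule image_subsetI)
      fix B assume B: "B \<in> {B. B \<subseteq> P - A \<and> card B = M - card A}"
      then have "finite B" using assms(1) finite_subset by blast
      then have "card (B \<union> A) = card B + card A" using B fA by (subst card_Un_disjoint) auto
      then show "B \<union> A \<in> {G. G \<subseteq> P \<and> card G = M \<and> A \<subseteq> G}" using B assms(2,3) by auto
    qed
  qed blast+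
  then have "card {G. G \<subseteq> P \<and> card G = M \<and> A \<subseteq> G} = card (P - A) choose (M - card A)"
    using assms(1) by (simp add: bij_betw_same_card n_subsets)
  then show ?thesis using assms(2) fA by (simp add: card_Diff_subset)
qed

lemma card_subsets_disjoint:
  assumes "finite P" "A \<subseteq> P"
  shows "card {G. G \<subseteq> P \<and> card G = M \<and> G \<inter> A = {}} = (card P - card A) choose M"
proof -
  have "{G. G \<subseteq> P \<and> card G = M \<and> G \<inter> A = {}} = {G. G \<subseteq> P - A \<and> card G = M}" by blast
  then show ?thesis
    using assms card_Diff_subset[OF finite_subset[OF assms(2,1)] assms(2)] by (simp add: n_subsets)
qed

lemma sum_card_Collect_swap:
  assumes "finite A" "finite B"
  shows "(\<Sum>a\<in>A. card {b\<in>B. R a b}) = (\<Sum>b\<in>B. card {a\<in>A. R a b})"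
proof -
  have card_eq: "card {x\<in>X. P x} = (\<Sum>x\<in>X. if P x then 1 else 0)"
    if "finite X" for X :: "'c set" and P
    using sum.inter_filter[OF that, of "\<lambda>_. 1::nat" P] by simp
  have "(\<Sum>a\<in>A. card {b\<in>B. R a b}) = (\<Sum>a\<in>A. \<Sum>b\<in>B. if R a b then 1 else 0)"
    using card_eq[OF assms(2)] by simp
  also have "\<dots> = (\<Sum>b\<in>B. \<Sum>a\<in>A. if R a b then 1 else 0)" by (rule sum.swap)
  also have "\<dots> = (\<Sum>b\<in>B. card {a\<in>A. R a b})"
    using card_eq[OF assms(1)] by simp
  finally show ?thesis .
qed

lemma binomial_diff_diff_le:
  assumes "j \<le> M" "M \<le> N"
  shows "real ((N - j) choose (M - j)) \<le> real (N choose M) * (real M / real N) ^ j"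
  using assms(1)
proof (induction j)
  case 0
  then show ?case by simp
next
  case (Suc j)
  define a b where "a = N - j" and "b = M - j"
  have b: "1 \<le> b" "b \<le> a" using Suc.prems assms(2) unfolding a_def b_def by auto
  have "a * ((a - 1) choose (b - 1)) = b * (a choose b)"
    using times_binomial_minus1_eq[of b a] b by simp
  then have "real a * real ((a - 1) choose (b - 1)) = real b * real (a choose b)"
    by (metis of_nat_mult)
  then have "real ((a - 1) choose (b - 1)) = real (a choose b) * (real b / real a)"
    using b by (simp add: field_simps)
  also have "\<dots> \<le> real (a choose b) * (real M / real N)"
  proof (rule mult_left_mono)
    have "real j * real M \<le> real j * real N" using assms(2) by (simp add: mult_left_mono)
    then have "real b * real N \<le> real M * real a"
      using Suc.prems assms(2) unfolding a_def b_def by (simp add: of_nat_diff algebra_simps)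
    moreover have "0 < a" "0 < N" using b Suc.prems assms(2) by auto
    ultimately show "real b / real a \<le> real M / real N"
      by (simp add: divide_simps)
  qed simp
  also have "\<dots> \<le> real (N choose M) * (real M / real N) ^ j * (real M / real N)"
    using Suc unfolding a_def b_def by (intro mult_right_mono) auto
  finally show ?case unfolding a_def b_def by (simp add: algebra_simps)
qed

lemma binomial_diff_le:
  assumes "M \<le> N"
  shows "real ((N - q) choose M) \<le> real (N choose M) * (1 - real M / real N) ^ q"
proof (induction q)
  case 0
  then show ?case by simp
next
  case (Suc q)
  have nonneg: "0 \<le> 1 - real M / real N"
    using assms by (cases "N = 0") (simp_all add: divide_le_eq_1)
  show ?case
  proof (cases "M < N - q")
    case False
    then have "(N - Suc q) choose M = 0 \<or> M = 0" by (auto simp: binomial_eq_0)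
    then show ?thesis using nonneg Suc by (auto simp: binomial_eq_0)
  next
    case True
    define a where "a = N - q"
    have a: "M < a" "a \<le> N" using True unfolding a_def by auto
    have "real a * real ((a - 1) choose M) = (real a - real M) * real (a choose M)"
      using binomial_absorb_comp[of a M] a by (metis of_nat_diff of_nat_mult less_imp_le)
    then have "real ((a - 1) choose M) = real (a choose M) * (1 - real M / real a)"
      using a by (simp add: field_simps)
    also have "\<dots> \<le> real (a choose M) * (1 - real M / real N)"
      using a by (intro mult_left_mono diff_left_mono divide_left_mono) auto
    also have "\<dots> \<le> real (N choose M) * (1 - real M / real N) ^ q * (1 - real M / real N)"
      using Suc nonneg unfolding a_def by (intro mult_right_mono) auto
    moreover have "a - 1 = N - Suc q" unfolding a_def by simp
    ultimately show ?thesis by (simp only: power_Suc2 mult.assoc)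
  qed
qed

section \<open>Edge sets with few triangles and no large independent set\<close>

definition no_independent_set :: "'a set \<Rightarrow> 'a set set \<Rightarrow> nat \<Rightarrow> bool" where
  "no_independent_set Y H t \<longleftrightarrow> (\<forall>S\<subseteq>Y. card S = t \<longrightarrow> tri_edges S \<inter> H \<noteq> {})"

lemma sum_card_triangles_edge_sets:
  assumes "finite Y" "3 \<le> M"
  shows "(\<Sum>G\<in>{G. G \<subseteq> tri_edges Y \<and> card G = M}. card (triangles Y G))
    = (card Y choose 3) * ((card (tri_edges Y) - 3) choose (M - 3))"
proof -
  let ?\<G> = "{G. G \<subseteq> tri_edges Y \<and> card G = M}"
  let ?X = "{X. X \<subseteq> Y \<and> card X = 3}"
  have fin: "finite (tri_edges Y)" using assms(1) unfolding tri_edges_def by simp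
  have "(\<Sum>G\<in>?\<G>. card (triangles Y G)) = (\<Sum>G\<in>?\<G>. card {X\<in>?X. tri_edges X \<subseteq> G})"
    unfolding triangles_eq by (simp add: conj_assoc)
  also have "\<dots> = (\<Sum>X\<in>?X. card {G\<in>?\<G>. tri_edges X \<subseteq> G})"
    using fin assms(1) by (intro sum_card_Collect_swap) auto
  also have "\<dots> = (\<Sum>X\<in>?X. (card (tri_edges Y) - 3) choose (M - 3))"
  proof (rule sum.cong[OF refl])
    fix X assume X: "X \<in> ?X"
    then have "finite X" using assms(1) finite_subset by blast
    then have "card (tri_edges X) = 3" using X by (simp add: card_tri_edges numeral_eq_Suc)
    moreover have "tri_edges X \<subseteq> tri_edges Y" using X unfolding tri_edges_def by auto
    moreover have "{G\<in>?\<G>. tri_edges X \<subseteq> G} = {G. G \<subseteq> tri_edges Y \<and> card G = M \<and> tri_edges X \<subseteq> G}"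
      by auto
    ultimately show "card {G\<in>?\<G>. tri_edges X \<subseteq> G} = (card (tri_edges Y) - 3) choose (M - 3)"
      using card_subsets_superset[OF fin, of "tri_edges X" M] assms(2) by simp
  qed
  also have "\<dots> = (card Y choose 3) * ((card (tri_edges Y) - 3) choose (M - 3))"
    using n_subsets[OF assms(1)] by simp
  finally show ?thesis .
qed

lemma sum_card_independent_sets_edge_sets:
  assumes "finite Y"
  shows "(\<Sum>G\<in>{G. G \<subseteq> tri_edges Y \<and> card G = M}. card {S. S \<subseteq> Y \<and> card S = t \<and> tri_edges S \<inter> G = {}})
    = (card Y choose t) * ((card (tri_edges Y) - (t choose 2)) choose M)"
proof -
  let ?\<G> = "{G. G \<subseteq> tri_edges Y \<and> card G = M}"
  let ?X = "{X. X \<subseteq> Y \<and> card X = t}"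
  have fin: "finite (tri_edges Y)" using assms(1) unfolding tri_edges_def by simp
  have "(\<Sum>G\<in>?\<G>. card {S. S \<subseteq> Y \<and> card S = t \<and> tri_edges S \<inter> G = {}})
      = (\<Sum>G\<in>?\<G>. card {X\<in>?X. tri_edges X \<inter> G = {}})"
    by (simp add: conj_assoc)
  also have "\<dots> = (\<Sum>X\<in>?X. card {G\<in>?\<G>. tri_edges X \<inter> G = {}})"
    using fin assms(1) by (intro sum_card_Collect_swap) auto
  also have "\<dots> = (\<Sum>X\<in>?X. (card (tri_edges Y) - (t choose 2)) choose M)"
  proof (rule sum.cong[OF refl])
    fix X assume X: "X \<in> ?X"
    then have "finite X" using assms(1) finite_subset by blast
    then have "card (tri_edges X) = t choose 2" using X by (simp add: card_tri_edges)
    moreover have "tri_edges X \<subseteq> tri_edges Y" using X unfolding tri_edges_def by auto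
    moreover have "{G\<in>?\<G>. tri_edges X \<inter> G = {}} = {G. G \<subseteq> tri_edges Y \<and> card G = M \<and> G \<inter> tri_edges X = {}}"
      by auto
    ultimately show "card {G\<in>?\<G>. tri_edges X \<inter> G = {}} = (card (tri_edges Y) - (t choose 2)) choose M"
      using card_subsets_disjoint[OF fin, of "tri_edges X" M] by simp
  qed
  also have "\<dots> = (card Y choose t) * ((card (tri_edges Y) - (t choose 2)) choose M)"
    using n_subsets[OF assms(1)] by simp
  finally show ?thesis .
qed

lemma exists_edge_set_few_triangles_no_independent_set:
  fixes K :: real
  assumes Y: "finite Y" and K: "0 < K" and M: "3 \<le> M"
    and count: "real (card Y choose 3) * real ((card (tri_edges Y) - 3) choose (M - 3))
      + K * (real (card Y choose t) * real ((card (tri_edges Y) - (t choose 2)) choose M))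
      < K * real (card (tri_edges Y) choose M)"
  shows "\<exists>H\<subseteq>tri_edges Y. no_independent_set Y H t \<and> real (card (triangles Y H)) < K"
proof -
  define \<G> where "\<G> = {G. G \<subseteq> tri_edges Y \<and> card G = M}"
  define I where "I G = {S. S \<subseteq> Y \<and> card S = t \<and> tri_edges S \<inter> G = {}}" for G
  have fin: "finite (tri_edges Y)" using Y unfolding tri_edges_def by simp
  \<comment> \<open>averaging: over all \<open>M\<close>-edge sets, triangles plus \<open>K\<close> times independent \<open>t\<close>-sets are below \<open>K\<close> on average\<close>
  have "(\<Sum>G\<in>\<G>. real (card (triangles Y G)) + K * real (card (I G)))
      = real (\<Sum>G\<in>\<G>. card (triangles Y G)) + K * real (\<Sum>G\<in>\<G>. card (I G))"
    by (simp add: sum.distrib sum_distrib_left)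
  also have "\<dots> < K * real (card \<G>)"
    using count sum_card_triangles_edge_sets[OF Y M] sum_card_independent_sets_edge_sets[OF Y]
    unfolding \<G>_def I_def by (simp add: n_subsets[OF fin])
  also have "\<dots> = (\<Sum>G\<in>\<G>. K)" by simp
  finally obtain G where G: "G \<in> \<G>" "real (card (triangles Y G)) + K * real (card (I G)) < K"
    using sum_mono[of \<G> "\<lambda>_. K"] by (meson not_le)
  have I: "card (I G) = 0"
  proof (rule ccontr)
    assume "card (I G) \<noteq> 0"
    then have "K \<le> K * real (card (I G))" using K by simp
    then show False using G(2) by simp
  qed
  moreover have "finite (I G)" using Y unfolding I_def by simp
  ultimately have "no_independent_set Y G t"
    unfolding no_independent_set_def I_def by auto
  moreover have "real (card (triangles Y G)) < K"
    using G(2) I by simp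
  ultimately show ?thesis using G(1) unfolding \<G>_def by blast
qed

section \<open>The parameters of the construction\<close>

text \<open>With \<open>m = 2^(4k)\<close> vertices and \<open>M = 2^(-3k) (m choose 2)\<close> edges, i.e. edge density
  \<open>p = 2^(-3k)\<close>, a random \<open>M\<close>-edge graph has on average at most \<open>p^3 m^3 = 2^(3k)\<close> triangles,
  and a fixed set of \<open>t \<approx> 16 k 2^(3k)\<close> vertices is independent with probability at most
  \<open>exp (- p (t choose 2)) \<le> m^(-t) / 2\<close>.\<close>

definition base_order :: "nat \<Rightarrow> nat" where
  "base_order k = 2 ^ (4 * k)"

definition edge_number :: "nat \<Rightarrow> nat" where
  "edge_number k = 2 ^ (k - 1) * (2 ^ (4 * k) - 1)"

definition independence_bound :: "nat \<Rightarrow> nat" where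
  "independence_bound k = 2 ^ (3 * k + 2) * (4 * k + 1) + 1"

definition triangle_bound :: "nat \<Rightarrow> real" where
  "triangle_bound k = 4 * 2 ^ (3 * k)"

lemma two_power_ge_linear: "7 \<le> k \<Longrightarrow> 16 * k + 5 \<le> (2::nat) ^ k"
  by (induction k rule: dec_induct) simp_all

lemma two_power_mul_exp_le_half:
  assumes "1 \<le> t"
  shows "(2::real) ^ (4 * y) * exp (- real (8 * y + 2 * t)) \<le> 1 / 2"
proof -
  have "(2::real) * 2 ^ (4 * y) \<le> 3 * 3 ^ (4 * y)"
    by (intro mult_mono power_mono) auto
  also have "\<dots> = 3 ^ (4 * y + 1)" by simp
  also have "\<dots> \<le> exp 2 ^ (4 * y + 1)"
    using exp_ge_add_one_self[of 2] by (intro power_mono) auto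
  also have "\<dots> = exp (real (8 * y + 2))"
    using exp_of_nat_mult[of "4 * y + 1" "2::real"] by (simp add: algebra_simps)
  also have "\<dots> \<le> exp (real (8 * y + 2 * t))"
    using assms by simp
  finally show ?thesis
    using exp_gt_zero[of "real (8 * y + 2 * t)"]
    unfolding exp_minus divide_inverse[symmetric] by (simp only: pos_divide_le_eq)
qed

lemma one_minus_power_le_exp:
  fixes p :: real
  assumes "0 \<le> p" "p \<le> 1"
  shows "(1 - p) ^ q \<le> exp (- (real q * p))"
proof -
  have "(1 - p) ^ q \<le> exp (- p) ^ q"
    using exp_ge_add_one_self[of "- p"] assms by (intro power_mono) auto
  then show ?thesis by (simp add: exp_of_nat_mult[symmetric])
qed

lemma base_order_choose_two:
  assumes "1 \<le> k"
  shows "base_order k choose 2 = 2 ^ (3 * k) * edge_number k"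
proof -
  define P Q m where "P = (2::nat) ^ (3 * k)" and "Q = (2::nat) ^ (k - 1)" and "m = (2::nat) ^ (4 * k)"
  have "3 * k + (k - 1) + 1 = 4 * k" using assms by simp
  then have "P * Q * 2 = m" unfolding P_def Q_def m_def by (metis power_add power_one_right)
  then have eq: "m * (m - 1) = 2 * (P * (Q * (m - 1)))" by (metis mult.assoc mult.commute)
  have "m choose 2 = P * (Q * (m - 1))" unfolding choose_two eq by simp
  then show ?thesis unfolding base_order_def edge_number_def P_def Q_def m_def by (simp only: mult.assoc)
qed

lemma three_le_edge_number: "1 \<le> k \<Longrightarrow> 3 \<le> edge_number k"
proof -
  assume "1 \<le> k"
  then have "(2::nat) ^ 2 \<le> 2 ^ (4 * k)" by (intro power_increasing) auto
  then have "1 * 3 \<le> 2 ^ (k - 1) * (2 ^ (4 * k) - (1::nat))"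
    by (intro mult_le_mono) auto
  then show ?thesis unfolding edge_number_def by simp
qed

lemma independence_bound_le_base_order:
  assumes "7 \<le> k"
  shows "independence_bound k \<le> base_order k"
proof -
  have "independence_bound k = 2 ^ (3 * k) * (16 * k + 4) + 1"
    unfolding independence_bound_def by (simp add: power_add algebra_simps)
  also have "\<dots> \<le> 2 ^ (3 * k) * (16 * k + 5)"
    by (simp add: algebra_simps)
  also have "\<dots> \<le> 2 ^ (3 * k) * 2 ^ k"
    using two_power_ge_linear[OF assms] by simp
  also have "\<dots> = base_order k"
    unfolding base_order_def by (simp add: power_add[symmetric])
  finally show ?thesis .
qed

lemma triangle_term_le:
  assumes "1 \<le> k"
  shows "real (base_order k choose 3) * real (((base_order k choose 2) - 3) choose (edge_number k - 3))
    \<le> triangle_bound k / 4 * real ((base_order k choose 2) choose edge_number k)"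
proof -
  define m N M P where "m = base_order k" and "N = base_order k choose 2"
    and "M = edge_number k" and "P = (2::nat) ^ (3 * k)"
  have N: "N = P * M" "0 < P" "3 \<le> M"
    using base_order_choose_two[OF assms] three_le_edge_number[OF assms]
    unfolding N_def P_def M_def by auto
  have "(2::nat) ^ 2 \<le> 2 ^ (4 * k)" using assms by (intro power_increasing) auto
  then have "m choose 3 \<le> m ^ 3" unfolding m_def base_order_def by (intro binomial_le_pow) simp
  then have m3: "real (m choose 3) \<le> real m ^ 3" by (metis of_nat_le_iff of_nat_power)
  have "real ((N - 3) choose (M - 3)) \<le> real (N choose M) * (1 / real P) ^ 3"
    using binomial_diff_diff_le[of 3 M N] N by (simp add: field_simps)
  with m3 have "real (m choose 3) * real ((N - 3) choose (M - 3))
      \<le> real m ^ 3 * (real (N choose M) * (1 / real P) ^ 3)"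
    by (intro mult_mono) auto
  also have "\<dots> = real m ^ 3 * (1 / real P) ^ 3 * real (N choose M)" by simp
  also have "real m ^ 3 * (1 / real P) ^ 3 = triangle_bound k / 4"
  proof -
    have "real m ^ 3 = real P ^ 3 * 2 ^ (3 * k)"
      unfolding m_def P_def base_order_def by (simp add: power_mult[symmetric] power_add[symmetric] algebra_simps)
    then show ?thesis unfolding triangle_bound_def using N(2) by (simp add: field_simps)
  qed
  finally show ?thesis unfolding m_def N_def M_def .
qed

lemma independence_bound_choose_two:
  "independence_bound k choose 2 = 2 ^ (3 * k) * (8 * k * independence_bound k + 2 * independence_bound k)"
proof -
  define t where "t = independence_bound k"
  have "t - 1 = 2 ^ (3 * k) * (4 * (4 * k + 1))"
    unfolding t_def independence_bound_def by (simp add: power_add algebra_simps)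
  then have "t * (t - 1) = 2 * (2 ^ (3 * k) * (8 * k * t + 2 * t))" by (simp add: algebra_simps)
  then show ?thesis unfolding t_def[symmetric] by (simp add: choose_two)
qed

lemma independent_term_le:
  assumes "7 \<le> k"
  shows "real (base_order k choose independence_bound k)
      * real (((base_order k choose 2) - (independence_bound k choose 2)) choose edge_number k)
    \<le> 1 / 2 * real ((base_order k choose 2) choose edge_number k)"
proof -
  define m N M P t where "m = base_order k" and "N = base_order k choose 2"
    and "M = edge_number k" and "P = (2::nat) ^ (3 * k)" and "t = independence_bound k"
  have N: "N = P * M" "1 \<le> P" "3 \<le> M"
    using base_order_choose_two three_le_edge_number assms
    unfolding N_def P_def M_def by auto
  have q: "t choose 2 = P * (8 * k * t + 2 * t)"
    unfolding t_def P_def by (rule independence_bound_choose_two)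
  have "real (m choose t) \<le> 2 ^ (4 * (k * t))"
  proof -
    have "m choose t \<le> m ^ t"
      using binomial_le_pow independence_bound_le_base_order[OF assms] unfolding m_def t_def by blast
    also have "m ^ t = 2 ^ (4 * (k * t))"
      unfolding m_def base_order_def by (simp add: power_mult[symmetric] mult.assoc)
    finally show ?thesis by (metis of_nat_le_iff of_nat_numeral of_nat_power)
  qed
  moreover have "real ((N - (t choose 2)) choose M) \<le> real (N choose M) * exp (- real (8 * (k * t) + 2 * t))"
  proof -
    have "real ((N - (t choose 2)) choose M) \<le> real (N choose M) * (1 - 1 / real P) ^ (t choose 2)"
      using binomial_diff_le[of M N "t choose 2"] N by (simp add: field_simps)
    also have "(1 - 1 / real P) ^ (t choose 2) \<le> exp (- (real (t choose 2) * (1 / real P)))"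
      using N(2) by (intro one_minus_power_le_exp) auto
    also have "real (t choose 2) * (1 / real P) = real (8 * (k * t) + 2 * t)"
      unfolding q using N(2) by (simp add: field_simps)
    finally show ?thesis by (simp add: mult_left_mono)
  qed
  moreover have "2 ^ (4 * (k * t)) * exp (- real (8 * (k * t) + 2 * t)) \<le> (1 / 2 :: real)"
    unfolding t_def independence_bound_def by (rule two_power_mul_exp_le_half) simp
  ultimately have "real (m choose t) * real ((N - (t choose 2)) choose M)
      \<le> 2 ^ (4 * (k * t)) * (real (N choose M) * exp (- real (8 * (k * t) + 2 * t)))"
    by (intro mult_mono) auto
  also have "\<dots> = 2 ^ (4 * (k * t)) * exp (- real (8 * (k * t) + 2 * t)) * real (N choose M)"
    by simp
  also have "\<dots> \<le> 1 / 2 * real (N choose M)"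
    using calculation \<open>2 ^ (4 * (k * t)) * exp (- real (8 * (k * t) + 2 * t)) \<le> 1 / 2\<close>
    by (intro mult_right_mono) auto
  finally show ?thesis unfolding m_def N_def M_def t_def .
qed

lemma exists_base_graph:
  assumes "7 \<le> k"
  shows "\<exists>H\<subseteq>tri_edges {0..<base_order k}.
    no_independent_set {0..<base_order k} H (independence_bound k)
    \<and> real (card (triangles {0..<base_order k} H)) < triangle_bound k"
proof -
  define N M K where "N = base_order k choose 2" and "M = edge_number k" and "K = triangle_bound k"
  have "M \<le> N" using base_order_choose_two[of k] assms unfolding N_def M_def by simp
  then have C: "0 < real (N choose M)" by simp
  have K: "0 < K" unfolding K_def triangle_bound_def by simp
  have "real (base_order k choose 3) * real ((N - 3) choose (M - 3))
      + K * (real (base_order k choose independence_bound k) * real ((N - (independence_bound k choose 2)) choose M))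
      \<le> K / 4 * real (N choose M) + K * (1 / 2 * real (N choose M))"
    using triangle_term_le[of k] independent_term_le[OF assms] assms K
    unfolding N_def M_def K_def by (intro add_mono mult_left_mono) auto
  also have "\<dots> < K * real (N choose M)" using K C by (simp add: field_simps)
  finally have count: "real (base_order k choose 3) * real ((N - 3) choose (M - 3))
      + K * (real (base_order k choose independence_bound k) * real ((N - (independence_bound k choose 2)) choose M))
      < K * real (N choose M)" .
  show ?thesis
    using count K assms three_le_edge_number[of k] unfolding N_def M_def K_def
    by (intro exists_edge_set_few_triangles_no_independent_set) (simp_all add: card_tri_edges)
qed

section \<open>Coning off a graph\<close>

definition cone :: "'a \<Rightarrow> 'a set \<Rightarrow> 'a set set \<Rightarrow> 'a set set" where
  "cone a Y H = H \<union> (\<lambda>y. {y, a}) ` Y"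

locale base_graph =
  fixes a :: 'a and Y :: "'a set" and H :: "'a set set"
  assumes finite_base: "finite Y" and apex_notin: "a \<notin> Y" and edges_base: "H \<subseteq> tri_edges Y"
begin

lemma edgeE:
  assumes "e \<in> H"
  obtains u v where "e = {u, v}" "u \<noteq> v" "u \<in> Y" "v \<in> Y"
proof -
  have "e \<subseteq> Y" "card e = 2" using assms edges_base unfolding tri_edges_def by auto
  then show ?thesis using that by (auto simp: card_2_iff)
qed

lemma apex_notin_edge: "e \<in> H \<Longrightarrow> a \<notin> e"
  using apex_notin by (auto elim: edgeE)

lemma finite_edges: "finite H"
proof -
  have "H \<subseteq> Pow Y" using edges_base unfolding tri_edges_def by auto
  then show ?thesis using finite_base by (simp add: finite_subset)
qed

lemma simple_graph_cone: "simple_graph (insert a Y) (cone a Y H)"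
proof -
  have "e \<subseteq> insert a Y \<and> card e = 2" if e: "e \<in> cone a Y H" for e
  proof (cases "e \<in> H")
    case True
    then show ?thesis by (auto elim: edgeE)
  next
    case False
    then obtain y where "y \<in> Y" "e = {y, a}" using e unfolding cone_def by auto
    moreover have "y \<noteq> a" using \<open>y \<in> Y\<close> apex_notin by auto
    ultimately show ?thesis by auto
  qed
  then show ?thesis unfolding simple_graph_def using finite_base by auto
qed

lemma apex_triangle_in_cone:
  assumes "e \<in> H"
  shows "insert a e \<in> triangles (insert a Y) (cone a Y H)"
proof -
  obtain u v where uv: "e = {u, v}" "u \<noteq> v" "u \<in> Y" "v \<in> Y" using assms by (rule edgeE)
  have "a \<noteq> u" "a \<noteq> v" using uv apex_notin by auto
  moreover have "{a, u} \<in> cone a Y H" "{a, v} \<in> cone a Y H" "{u, v} \<in> cone a Y H"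
    using uv assms unfolding cone_def by (auto simp: insert_commute)
  ultimately show ?thesis
    using uv unfolding triangles_eq by (auto simp: tri_edges_triple)
qed

lemma triangle_in_cone_cases:
  assumes "t \<in> triangles (insert a Y) (cone a Y H)"
  shows "(\<exists>e\<in>H. t = insert a e) \<or> t \<in> triangles Y H"
proof -
  obtain x y z where xyz: "t = {x, y, z}" "x \<noteq> y" "y \<noteq> z" "x \<noteq> z"
    "{x, y} \<in> cone a Y H" "{y, z} \<in> cone a Y H" "{x, z} \<in> cone a Y H"
    using assms by (rule trianglesE)
  have base_edge: "{u, v} \<in> H" "u \<in> Y" "v \<in> Y"
    if "{u, v} \<in> cone a Y H" "u \<noteq> a" "v \<noteq> a" for u v
  proof -
    show "{u, v} \<in> H" using that unfolding cone_def by (auto simp: doubleton_eq_iff)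
    then have "{u, v} \<subseteq> Y" using edges_base unfolding tri_edges_def by auto
    then show "u \<in> Y" "v \<in> Y" by auto
  qed
  consider "x = a" | "y = a" | "z = a" | "x \<noteq> a" "y \<noteq> a" "z \<noteq> a" by blast
  then show ?thesis
  proof cases
    case 1
    then have "t = insert a {y, z}" using xyz(1) by simp
    then show ?thesis using 1 xyz base_edge[of y z] by blast
  next
    case 2
    then have "t = insert a {x, z}" using xyz(1) by auto
    then show ?thesis using 2 xyz base_edge[of x z] by blast
  next
    case 3
    then have "t = insert a {x, y}" using xyz(1) by auto
    then show ?thesis using 3 xyz base_edge[of x y] by blast
  next
    case 4
    then show ?thesis using xyz base_edge[of x y] base_edge[of y z] base_edge[of x z]
      unfolding triangles_def by blast
  qed
qed

lemma inj_on_apex_edges: "inj_on (\<lambda>y. {y, a}) Y"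
  using apex_notin by (auto simp: inj_on_def doubleton_eq_iff)

lemma sum_cone: "(\<Sum>e\<in>cone a Y H. g e) = (\<Sum>y\<in>Y. g {y, a}) + (\<Sum>e\<in>H. g e)"
proof -
  have "cone a Y H = (\<lambda>y. {y, a}) ` Y \<union> H" unfolding cone_def by blast
  moreover have "(\<lambda>y. {y, a}) ` Y \<inter> H = {}" using apex_notin_edge by blast
  ultimately show ?thesis
    using finite_base finite_edges inj_on_apex_edges by (simp add: sum.union_disjoint sum.reindex)
qed

lemma tau_cone_le: "tau (insert a Y) (cone a Y H) \<le> card Y + card (triangles Y H)"
proof -
  obtain f where f: "\<forall>t\<in>triangles Y H. f t \<in> H \<inter> tri_edges t" by (rule triangle_edge_choice)
  define F where "F = (\<lambda>y. {y, a}) ` Y \<union> f ` triangles Y H"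
  have "triangle_cover (insert a Y) (cone a Y H) F"
    unfolding triangle_cover_def
  proof (intro conjI ballI)
    show "F \<subseteq> cone a Y H" using f unfolding F_def cone_def by auto
  next
    fix t assume "t \<in> triangles (insert a Y) (cone a Y H)"
    then consider e where "e \<in> H" "t = insert a e" | "t \<in> triangles Y H"
      using triangle_in_cone_cases by blast
    then show "F \<inter> tri_edges t \<noteq> {}"
    proof cases
      case 1
      then obtain u v where "t = {a, u, v}" "u \<in> Y" by (auto elim: edgeE)
      moreover have "u \<noteq> a" using \<open>u \<in> Y\<close> apex_notin by auto
      ultimately have "{u, a} \<in> F \<inter> tri_edges t"
        unfolding F_def tri_edges_def by auto
      then show ?thesis by blast
    next
      case 2
      then show ?thesis using f unfolding F_def by blast
    qed
  qed
  then have "tau (insert a Y) (cone a Y H) \<le> card F" by (rule tau_le_card[OF simple_graph_cone])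
  also have "\<dots> \<le> card Y + card (triangles Y H)"
    using card_Un_le[of "(\<lambda>y. {y, a}) ` Y" "f ` triangles Y H"]
      card_image_le[OF finite_base, of "\<lambda>y. {y, a}"]
      card_image_le[OF finite_triangles[OF finite_base], of f H]
    unfolding F_def by linarith
  finally show ?thesis .
qed

lemma fractional_cover_cone:
  assumes f: "\<forall>t\<in>triangles Y H. f t \<in> H \<inter> tri_edges t"
  shows "fractional_cover (insert a Y) (cone a Y H)
    (\<lambda>e. if a \<in> e then 1 / 2 else if e \<in> f ` triangles Y H then 1 else 0)"
    (is "fractional_cover _ _ ?x")
  unfolding fractional_cover_def
proof (intro conjI ballI)
  fix t assume "t \<in> triangles (insert a Y) (cone a Y H)"
  then consider e where "e \<in> H" "t = insert a e" | "t \<in> triangles Y H"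
    using triangle_in_cone_cases by blast
  then show "1 \<le> (\<Sum>e\<in>tri_edges t. ?x e)"
  proof cases
    case 1
    then obtain u v where uv: "t = {a, u, v}" "u \<noteq> v" "u \<in> Y" "v \<in> Y" by (auto elim: edgeE)
    then have "a \<noteq> u" "a \<noteq> v" using apex_notin by auto
    then have "(\<Sum>e\<in>tri_edges t. ?x e) = 1 / 2 + ?x {u, v} + 1 / 2"
      unfolding uv(1) by (simp add: sum_tri_edges_triple uv(2))
    then show ?thesis by simp
  next
    case 2
    then have ft: "f t \<in> tri_edges t" "?x (f t) = 1"
      using f apex_notin_edge by auto
    have "finite (tri_edges t)"
      using 2 finite_subset[OF _ finite_edges] unfolding triangles_eq by blast
    then have "?x (f t) \<le> (\<Sum>e\<in>tri_edges t. ?x e)"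
      using ft(1) by (intro member_le_sum) auto
    with ft(2) show ?thesis by simp
  qed
qed simp

lemma tau_star_cone_le:
  "tau_star (insert a Y) (cone a Y H) \<le> real (card Y) / 2 + real (card (triangles Y H))"
proof -
  obtain f where f: "\<forall>t\<in>triangles Y H. f t \<in> H \<inter> tri_edges t" by (rule triangle_edge_choice)
  define x :: "'a set \<Rightarrow> real"
    where "x e = (if a \<in> e then 1 / 2 else if e \<in> f ` triangles Y H then 1 else 0)" for e
  have "fractional_cover (insert a Y) (cone a Y H) x"
    unfolding x_def by (rule fractional_cover_cone[OF f])
  then have "tau_star (insert a Y) (cone a Y H) \<le> (\<Sum>e\<in>cone a Y H. x e)"
    by (rule tau_star_le_sum)
  also have "\<dots> = (\<Sum>y\<in>Y. x {y, a}) + (\<Sum>e\<in>H. x e)" by (rule sum_cone)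
  also have "(\<Sum>y\<in>Y. x {y, a}) = real (card Y) / 2" by (simp add: x_def)
  also have "(\<Sum>e\<in>H. x e) = (\<Sum>e\<in>f ` triangles Y H. 1)"
  proof (rule sum.mono_neutral_cong_right)
    show "\<forall>e\<in>H - f ` triangles Y H. x e = 0" "\<And>e. e \<in> f ` triangles Y H \<Longrightarrow> x e = 1"
      using f apex_notin_edge unfolding x_def by auto
  qed (use f finite_edges in auto)
  also have "\<dots> \<le> real (card (triangles Y H))"
    using card_image_le[OF finite_triangles[OF finite_base]] by simp
  finally show ?thesis by simp
qed

lemma edge_inside_if_large:
  assumes "no_independent_set Y H t" "T \<subseteq> Y" "t \<le> card T"
  shows "\<exists>e\<in>H. e \<subseteq> T"
proof -
  obtain S where "S \<subseteq> T" "card S = t" using assms(3) by (meson obtain_subset_with_card_n)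
  then obtain e where "e \<in> H" "e \<in> tri_edges S"
    using assms(1,2) unfolding no_independent_set_def by blast
  then show ?thesis using \<open>S \<subseteq> T\<close> unfolding tri_edges_def by blast
qed

lemma exists_large_matching:
  assumes "no_independent_set Y H t"
  shows "\<exists>Mt\<subseteq>H. pairwise disjnt Mt \<and> card Y < 2 * card Mt + t"
proof -
  have "\<exists>Mt. (Mt \<subseteq> H \<and> pairwise disjnt Mt)
      \<and> (\<forall>M'. M' \<subseteq> H \<and> pairwise disjnt M' \<longrightarrow> card M' \<le> card Mt)"
  proof (rule ex_has_greatest_nat[where k = "{}" and b = "card H + 1"])
    show "\<forall>M'. M' \<subseteq> H \<and> pairwise disjnt M' \<longrightarrow> card M' < card H + 1"
      using card_mono[OF finite_edges] by (simp add: less_Suc_eq_le)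
  qed simp
  then obtain Mt where Mt: "Mt \<subseteq> H" "pairwise disjnt Mt"
    and maximum: "\<And>M'. M' \<subseteq> H \<Longrightarrow> pairwise disjnt M' \<Longrightarrow> card M' \<le> card Mt"
    by blast
  have finMt: "finite Mt" using Mt(1) finite_edges finite_subset by blast
  have Mt_edges: "e \<subseteq> Y" "card e = 2" if "e \<in> Mt" for e
    using that Mt(1) edges_base unfolding tri_edges_def by auto
  \<comment> \<open>otherwise the uncovered vertices span an edge that enlarges the matching\<close>
  have "card (Y - \<Union>Mt) < t"
  proof (rule ccontr)
    assume "\<not> card (Y - \<Union>Mt) < t"
    then obtain e where e: "e \<in> H" "e \<subseteq> Y - \<Union>Mt"
      using edge_inside_if_large[OF assms, of "Y - \<Union>Mt"] by auto
    have "e \<noteq> {}" using e(1) edges_base unfolding tri_edges_def by auto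
    then have "e \<notin> Mt" using e(2) by blast
    have "pairwise disjnt (insert e Mt)"
      using Mt(2) e(2) unfolding pairwise_insert disjnt_def by blast
    have "card Mt < card (insert e Mt)" using finMt \<open>e \<notin> Mt\<close> by simp
    then show False using maximum[of "insert e Mt"] Mt(1) e(1) \<open>pairwise disjnt (insert e Mt)\<close> by simp
  qed
  moreover have "card (\<Union>Mt) = 2 * card Mt"
    using card_Union_disjoint[OF Mt(2)] finMt Mt_edges by (simp add: card_ge_0_finite)
  moreover have "card Y = card (Y - \<Union>Mt) + card (\<Union>Mt)"
  proof -
    have U: "\<Union>Mt \<subseteq> Y" using Mt_edges by blast
    show ?thesis using card_Diff_subset[OF finite_subset[OF U finite_base] U]
      card_mono[OF finite_base U] by linarith
  qed
  ultimately show ?thesis using Mt by auto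
qed

lemma tau_star_cone_ge:
  assumes "no_independent_set Y H t"
  shows "real (card Y) < 2 * tau_star (insert a Y) (cone a Y H) + real t"
proof -
  obtain Mt where Mt: "Mt \<subseteq> H" "pairwise disjnt Mt" "card Y < 2 * card Mt + t"
    using exists_large_matching[OF assms] by blast
  have "inj_on (insert a) Mt"
  proof (rule inj_onI)
    fix e e' assume "e \<in> Mt" "e' \<in> Mt" "insert a e = insert a e'"
    moreover from this have "a \<notin> e" "a \<notin> e'" using Mt(1) apex_notin_edge by auto
    ultimately show "e = e'" by (metis Diff_insert_absorb)
  qed
  then have card_eq: "card (insert a ` Mt) = card Mt" by (rule card_image)
  \<comment> \<open>apex triangles over disjoint edges share only the apex, hence no edge\<close>
  have disj: "pairwise (\<lambda>s t. disjnt (tri_edges s) (tri_edges t)) (insert a ` Mt)"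
  proof (rule pairwise_imageI)
    fix e e' assume "e \<in> Mt" "e' \<in> Mt" "e \<noteq> e'"
    then have "insert a e \<inter> insert a e' \<subseteq> {a}"
      using Mt(2) unfolding pairwise_def disjnt_def by blast
    then have small: "card x \<le> 1" if "x \<subseteq> insert a e" "x \<subseteq> insert a e'" for x
    proof -
      have "x \<subseteq> {a}" using that \<open>insert a e \<inter> insert a e' \<subseteq> {a}\<close> by blast
      then show ?thesis using card_mono[of "{a}" x] by simp
    qed
    show "disjnt (tri_edges (insert a e)) (tri_edges (insert a e'))"
      unfolding disjnt_def tri_edges_def
    proof (rule equals0I)
      fix x assume "x \<in> {x. x \<subseteq> insert a e \<and> card x = 2} \<inter> {x. x \<subseteq> insert a e' \<and> card x = 2}"
      then show False using small[of x] by simp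
    qed
  qed
  have "insert a ` Mt \<subseteq> triangles (insert a Y) (cone a Y H)"
    using Mt(1) apex_triangle_in_cone by auto
  then have "real (card Mt) \<le> tau_star (insert a Y) (cone a Y H)"
    using card_le_tau_star[OF simple_graph_cone _ disj] unfolding card_eq by blast
  then show ?thesis using Mt(3) by linarith
qed

lemma card_lt_edges_inside:
  assumes "no_independent_set Y H t" "T \<subseteq> Y"
  shows "card T < card {e\<in>H. e \<subseteq> T} + t"
  using assms(2)
proof (induction "card T" arbitrary: T rule: less_induct)
  case less
  show ?case
  proof (cases "\<exists>e\<in>H. e \<subseteq> T")
    case True
    then obtain e where e: "e \<in> H" "e \<subseteq> T" by blast
    obtain u v where uv: "e = {u, v}" "u \<noteq> v" "u \<in> Y" "v \<in> Y" using e(1) by (rule edgeE)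
    define T' where "T' = T - {u}"
    have "finite T" using less.prems finite_base finite_subset by blast
    moreover have "u \<in> T" using e uv by auto
    ultimately have card_T: "card T = Suc (card T')" unfolding T'_def by (rule card_Suc_Diff1[symmetric])
    have "T' \<subseteq> Y" using less.prems unfolding T'_def by auto
    then have IH: "card T' < card {e\<in>H. e \<subseteq> T'} + t"
      using less.hyps[of T'] card_T by simp
    have "{e\<in>H. e \<subseteq> T'} \<subseteq> {e\<in>H. e \<subseteq> T}" unfolding T'_def by auto
    moreover have "e \<notin> {e\<in>H. e \<subseteq> T'}" "e \<in> {e\<in>H. e \<subseteq> T}"
      using e uv unfolding T'_def by auto
    ultimately have "{e\<in>H. e \<subseteq> T'} \<subset> {e\<in>H. e \<subseteq> T}" by blast
    then have "card {e\<in>H. e \<subseteq> T'} < card {e\<in>H. e \<subseteq> T}"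
      using finite_edges by (simp add: psubset_card_mono)
    then show ?thesis using IH card_T by linarith
  next
    case False
    then have "card T < t" using edge_inside_if_large[OF assms(1) less.prems] by (meson not_le)
    then show ?thesis by simp
  qed
qed

lemma base_edge_in_cover:
  assumes F: "triangle_cover (insert a Y) (cone a Y H) F" and e: "e \<in> H"
    and missing: "\<forall>y\<in>e. {y, a} \<notin> F"
  shows "e \<in> F"
proof -
  obtain u v where uv: "e = {u, v}" "u \<noteq> v" "u \<in> Y" "v \<in> Y" using e by (rule edgeE)
  have "a \<noteq> u" "a \<noteq> v" using uv apex_notin by auto
  then have edges: "tri_edges (insert a e) = {{a, u}, {u, v}, {a, v}}"
    unfolding uv(1) using uv(2) by (simp add: tri_edges_triple)
  have "F \<inter> tri_edges (insert a e) \<noteq> {}"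
    using F apex_triangle_in_cone[OF e] unfolding triangle_cover_def by blast
  then obtain x where x: "x \<in> F" "x \<in> {{a, u}, {u, v}, {a, v}}" unfolding edges by blast
  moreover have "{u, a} \<notin> F" "{v, a} \<notin> F" using missing uv(1) by auto
  ultimately have "x = {u, v}" by (auto simp: insert_commute)
  then show ?thesis using x(1) uv(1) by simp
qed

lemma tau_cone_ge:
  assumes "no_independent_set Y H t"
  shows "card Y < tau (insert a Y) (cone a Y H) + t"
proof -
  obtain F where F: "triangle_cover (insert a Y) (cone a Y H) F" "card F = tau (insert a Y) (cone a Y H)"
    by (rule tau_obtains_cover[OF simple_graph_cone])
  define T where "T = {y\<in>Y. {y, a} \<notin> F}"
  define A where "A = (\<lambda>y. {y, a}) ` (Y - T)"
  define B where "B = {e\<in>H. e \<subseteq> T}"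
  have "finite F"
    using F(1) simple_graph_finite_edges[OF simple_graph_cone] finite_subset
    unfolding triangle_cover_def by blast
  have AF: "A \<subseteq> F" unfolding A_def T_def by auto
  have BF: "B \<subseteq> F"
    using base_edge_in_cover[OF F(1)] unfolding B_def T_def by blast
  have "finite A" "finite B" using AF BF \<open>finite F\<close> by (blast intro: finite_subset)+
  moreover have "A \<inter> B = {}" using apex_notin_edge unfolding A_def B_def by blast
  ultimately have "card (A \<union> B) = card A + card B" by (rule card_Un_disjoint)
  then have AB: "card A + card B \<le> card F"
    using card_mono[OF \<open>finite F\<close>, of "A \<union> B"] AF BF by simp
  have T: "T \<subseteq> Y" unfolding T_def by auto
  then have "card A = card Y - card T"
    using inj_on_subset[OF inj_on_apex_edges, of "Y - T"]
      card_Diff_subset[OF finite_subset[OF T finite_base] T]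
    unfolding A_def by (simp add: card_image)
  moreover have "card T < card B + t"
    using card_lt_edges_inside[OF assms T] unfolding B_def .
  moreover have "card T \<le> card Y" using card_mono[OF finite_base T] .
  ultimately show ?thesis using AB F(2) by linarith
qed

lemma cone_tau_tau_star_bounds:
  assumes "no_independent_set Y H t" "real (card (triangles Y H)) \<le> K"
  shows "real (card Y) - (t + K) \<le> tau (insert a Y) (cone a Y H)"
    "tau (insert a Y) (cone a Y H) \<le> real (card Y) + (t + K)"
    "real (card Y) - (t + K) \<le> 2 * tau_star (insert a Y) (cone a Y H)"
    "tau_star (insert a Y) (cone a Y H) \<le> real (card Y) / 2 + (t + K)"
proof -
  have "card Y < tau (insert a Y) (cone a Y H) + t" "tau (insert a Y) (cone a Y H) \<le> card Y + card (triangles Y H)"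
    using tau_cone_ge[OF assms(1)] tau_cone_le by simp_all
  then have "real (card Y) < tau (insert a Y) (cone a Y H) + real t"
    "real (tau (insert a Y) (cone a Y H)) \<le> card Y + real (card (triangles Y H))"
    by (metis of_nat_add of_nat_less_iff, metis of_nat_add of_nat_le_iff)
  then show "real (card Y) - (t + K) \<le> tau (insert a Y) (cone a Y H)"
    "tau (insert a Y) (cone a Y H) \<le> real (card Y) + (t + K)"
    using assms(2) by linarith+
  show "real (card Y) - (t + K) \<le> 2 * tau_star (insert a Y) (cone a Y H)"
    "tau_star (insert a Y) (cone a Y H) \<le> real (card Y) / 2 + (t + K)"
    using tau_star_cone_ge[OF assms(1)] tau_star_cone_le assms(2) by linarith+
qed

end

section \<open>The ratio tends to two\<close>

lemma tendsto_ratio_two: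
  fixes x y m e :: "nat \<Rightarrow> real"
  assumes m: "\<And>n. 0 < m n" and e: "(\<lambda>n. e n / m n) \<longlonglongrightarrow> 0"
    and x: "\<And>n. m n - e n \<le> x n" "\<And>n. x n \<le> m n + e n"
    and y: "\<And>n. m n - e n \<le> 2 * y n" "\<And>n. y n \<le> m n / 2 + e n"
  shows "(\<lambda>n. x n / y n) \<longlonglongrightarrow> 2"
proof -
  have lim: "(\<lambda>n. 1 - e n / m n) \<longlonglongrightarrow> 1" "(\<lambda>n. 1 + e n / m n) \<longlonglongrightarrow> 1"
    "(\<lambda>n. (1 - e n / m n) / 2) \<longlonglongrightarrow> 1 / 2" "(\<lambda>n. 1 / 2 + e n / m n) \<longlonglongrightarrow> 1 / 2"
    using tendsto_diff[OF tendsto_const e, of 1] tendsto_add[OF tendsto_const e, of 1]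
      tendsto_divide[OF tendsto_diff[OF tendsto_const e, of 1] tendsto_const, of 2]
      tendsto_add[OF tendsto_const e, of "1 / 2"] by simp_all
  have bounds: "1 - e n / m n \<le> x n / m n" "x n / m n \<le> 1 + e n / m n"
    "(1 - e n / m n) / 2 \<le> y n / m n" "y n / m n \<le> 1 / 2 + e n / m n" for n
    using m[of n] x[of n] y[of n] by (simp_all add: le_divide_eq divide_le_eq algebra_simps)
  have "(\<lambda>n. (x n / m n) / (y n / m n)) \<longlonglongrightarrow> 1 / (1 / 2)"
  proof (rule tendsto_divide)
    show "(\<lambda>n. x n / m n) \<longlonglongrightarrow> 1"
      by (rule tendsto_sandwich[OF always_eventually always_eventually lim(1,2)]) (use bounds in simp_all)
    show "(\<lambda>n. y n / m n) \<longlonglongrightarrow> 1 / 2"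
      by (rule tendsto_sandwich[OF always_eventually always_eventually lim(3,4)]) (use bounds in simp_all)
  qed simp
  moreover have "(x n / m n) / (y n / m n) = x n / y n" for n
    using m[of n] by (cases "y n = 0") (simp_all add: field_simps)
  ultimately show ?thesis by (simp only:) simp
qed

lemma error_over_base_order_le:
  "(real (independence_bound k) + triangle_bound k) / real (base_order k) \<le> (16 * real k + 9) / 2 ^ k"
proof -
  have "real (independence_bound k) + triangle_bound k = 2 ^ (3 * k) * (16 * real k + 8) + 1"
    unfolding independence_bound_def triangle_bound_def by (simp add: power_add algebra_simps)
  also have "\<dots> \<le> 2 ^ (3 * k) * (16 * real k + 9)"
    using one_le_power[of "2::real" "3 * k"] by (simp add: algebra_simps)
  finally have "(real (independence_bound k) + triangle_bound k) / (2 ^ (3 * k) * 2 ^ k)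
      \<le> 2 ^ (3 * k) * (16 * real k + 9) / (2 ^ (3 * k) * 2 ^ k)"
    by (rule divide_right_mono) simp
  moreover have "real (base_order k) = 2 ^ (3 * k) * 2 ^ k"
    unfolding base_order_def by (simp add: power_add[symmetric])
  ultimately show ?thesis by simp
qed

lemma error_over_base_order_tendsto_zero:
  "(\<lambda>k. (real (independence_bound k) + triangle_bound k) / real (base_order k)) \<longlonglongrightarrow> 0"
proof (rule tendsto_sandwich[OF always_eventually always_eventually tendsto_const])
  have "(\<lambda>k. 16 * (real k / 2 ^ k) + 9 / 2 ^ k) \<longlonglongrightarrow> 16 * 0 + (0::real)"
    using lim_n_over_pown[of "2::real"] LIMSEQ_divide_realpow_zero[of 2 9]
    by (intro tendsto_add tendsto_mult) simp_all
  then show "(\<lambda>k. (16 * real k + 9) / 2 ^ k) \<longlonglongrightarrow> (0::real)"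
    by (simp add: add_divide_distrib)
qed (simp add: triangle_bound_def, simp add: error_over_base_order_le)

lemma exists_family_tau_over_tau_star_tendsto_two:
  "\<exists>(Vs :: nat \<Rightarrow> nat set) Es. (\<forall>n. simple_graph (Vs n) (Es n)) \<and>
     (\<forall>n. tau_star (Vs n) (Es n) > 0) \<and>
     (\<lambda>n. real (tau (Vs n) (Es n)) / tau_star (Vs n) (Es n)) \<longlonglongrightarrow> 2"
proof -
  define m t K where "m n = base_order (n + 7)" and "t n = independence_bound (n + 7)"
    and "K n = triangle_bound (n + 7)" for n
  have "\<forall>n. \<exists>H. H \<subseteq> tri_edges {0..<m n} \<and> no_independent_set {0..<m n} H (t n)
      \<and> real (card (triangles {0..<m n} H)) < K n"
    unfolding m_def t_def K_def using exists_base_graph by simp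
  then obtain H where base: "\<And>n. base_graph (m n) {0..<m n} (H n)"
    and indep: "\<And>n. no_independent_set {0..<m n} (H n) (t n)"
    and few: "\<And>n. real (card (triangles {0..<m n} (H n))) \<le> K n"
    unfolding base_graph_def by (metis atLeastLessThan_iff finite_atLeastLessThan less_irrefl less_imp_le)
  define Vs Es where "Vs n = insert (m n) {0..<m n}" and "Es n = cone (m n) {0..<m n} (H n)" for n
  note bounds = base_graph.cone_tau_tau_star_bounds[OF base indep few, unfolded card_atLeastLessThan diff_zero,
      folded Vs_def Es_def]
  have "0 < tau_star (Vs n) (Es n)" for n
  proof -
    have "real (t n) \<le> real (m n)"
      unfolding t_def m_def by (simp add: independence_bound_le_base_order)
    moreover have "real (m n) < 2 * tau_star (Vs n) (Es n) + real (t n)"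
      using base_graph.tau_star_cone_ge[OF base indep] unfolding Vs_def Es_def by simp
    ultimately show ?thesis by linarith
  qed
  moreover have "(\<lambda>n. real (tau (Vs n) (Es n)) / tau_star (Vs n) (Es n)) \<longlonglongrightarrow> 2"
  proof (rule tendsto_ratio_two[OF _ _ bounds])
    show "(\<lambda>n. (real (t n) + K n) / real (m n)) \<longlonglongrightarrow> 0"
      using LIMSEQ_ignore_initial_segment[OF error_over_base_order_tendsto_zero, of 7]
      unfolding m_def t_def K_def .
  qed (simp add: m_def base_order_def)
  moreover have "simple_graph (Vs n) (Es n)" for n
    unfolding Vs_def Es_def by (rule base_graph.simple_graph_cone[OF base])
  ultimately show ?thesis by blast
qed

theorem proposition6:
  shows "(\<forall>(V :: 'a set) E. simple_graph V E \<longrightarrow>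
            real (tau V E) \<le> 3 / 2 * tau_k 3 V E)
       \<and> (\<exists>(Vs :: nat \<Rightarrow> nat set) Es.
            (\<forall>n. simple_graph (Vs n) (Es n)) \<and>
            (\<forall>n. tau_star (Vs n) (Es n) > 0) \<and>
            (\<lambda>n. real (tau (Vs n) (Es n)) / tau_star (Vs n) (Es n)) \<longlonglongrightarrow> 2)"
  using tau_le_three_halves_tau_k exists_family_tau_over_tau_star_tendsto_two by blast

end
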